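(* Let $\mathcal{G}=(V,L)$ be a finite connected undirected graph with monitor set $M$ and non-monitor set $N=V\setminus M$, $\sigma=|N|$, and let $P$ be a given set of measurement paths between monitors (Uncontrollable Probing). For $1\le k\le\sigma-1$ let $S^{\mathrm{outer}}(k):=\{v\in N:\mathrm{MSC}(v)\ge k\}$ and $S^{\mathrm{inner}}(k):=\{v\in N:\mathrm{MSC}(v)\ge k+1\}$, and let $S^*_{\mathrm{UP}}(k)$ be the maximum-cardinality $k$-identifiable subset of $N$. Then $S^{\mathrm{inner}}(k)\subseteq S^*_{\mathrm{UP}}(k)\subseteq S^{\mathrm{outer}}(k)$.
   Context: A failure set is any $F\subseteq N$; a path fails iff it traverses a node of $F$. $P_F$ is the set of paths in $P$ traversing a node of $F$; $F_1,F_2$ distinguishable iff $P_{F_1}\ne P_{F_2}$. $S\subseteq N$ is $k$-identifiable if any two failure sets $F_1,F_2$ with $|F_1|,|F_2|\le k$ and $F_1\cap S\ne F_2\cap S$ are distinguishable; the maximum-cardinality $k$-identifiable subset of $N$ is unique. For $v\in N$, $P_v$ is the set of paths in $P$ traversing $v$. $\mathrm{MSC}(v)$ is the minimum cardinality of a set $V'\subseteq N\setminus\{v\}$ with $P_v\subseteq\bigcup_{w\in V'}P_w$; if no such $V'$ exists (e.g. when $v$ lies on a two-hop measurement path monitor–$v$–monitor), $\mathrm{MSC}(v):=\sigma$. *)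

theory Defs
  imports Main
begin

definition connected_graph :: "'v set \<Rightarrow> ('v \<Rightarrow> 'v \<Rightarrow> bool) \<Rightarrow> bool" where
  "connected_graph V E \<longleftrightarrow> finite V \<and> V \<noteq> {}
     \<and> (\<forall>u w. E u w \<longrightarrow> u \<in> V \<and> w \<in> V)
     \<and> (\<forall>u w. E u w \<longrightarrow> E w u) \<and> (\<forall>u. \<not> E u u)
     \<and> (\<forall>u\<in>V. \<forall>w\<in>V. (u, w) \<in> {(a, b). E a b}\<^sup>*)"

definition is_path :: "'v set \<Rightarrow> ('v \<Rightarrow> 'v \<Rightarrow> bool) \<Rightarrow> 'v list \<Rightarrow> bool" where
  "is_path V E p \<longleftrightarrow> p \<noteq> [] \<and> set p \<subseteq> V \<and> distinct p
     \<and> (\<forall>i. Suc i < length p \<longrightarrow> E (p ! i) (p ! Suc i))"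

definition measurement_path :: "'v set \<Rightarrow> ('v \<Rightarrow> 'v \<Rightarrow> bool) \<Rightarrow> 'v set \<Rightarrow> 'v list \<Rightarrow> bool" where
  "measurement_path V E M p \<longleftrightarrow> is_path V E p \<and> length p \<ge> 2 \<and> hd p \<in> M \<and> last p \<in> M"

definition paths_through :: "'v list set \<Rightarrow> 'v set \<Rightarrow> 'v list set" where
  "paths_through P F = {p \<in> P. set p \<inter> F \<noteq> {}}"

definition distinguishable :: "'v list set \<Rightarrow> 'v set \<Rightarrow> 'v set \<Rightarrow> bool" where
  "distinguishable P F1 F2 \<longleftrightarrow> paths_through P F1 \<noteq> paths_through P F2"

definition k_identifiable :: "'v list set \<Rightarrow> 'v set \<Rightarrow> nat \<Rightarrow> 'v set \<Rightarrow> bool" where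
  "k_identifiable P N k S \<longleftrightarrow>
     (\<forall>F1 F2. F1 \<subseteq> N \<and> F2 \<subseteq> N \<and> card F1 \<le> k \<and> card F2 \<le> k \<and> F1 \<inter> S \<noteq> F2 \<inter> S
        \<longrightarrow> distinguishable P F1 F2)"

definition max_k_identifiable :: "'v list set \<Rightarrow> 'v set \<Rightarrow> nat \<Rightarrow> 'v set \<Rightarrow> bool" where
  "max_k_identifiable P N k S \<longleftrightarrow> S \<subseteq> N \<and> k_identifiable P N k S
     \<and> (\<forall>S'. S' \<subseteq> N \<and> k_identifiable P N k S' \<longrightarrow> card S' \<le> card S)"

text \<open>MSC(v); equals sigma = |N| if no covering set exists.\<close>
definition MSC :: "'v list set \<Rightarrow> 'v set \<Rightarrow> 'v \<Rightarrow> nat" where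
  "MSC P N v =
     (if \<exists>V'. V' \<subseteq> N - {v} \<and> paths_through P {v} \<subseteq> (\<Union>w\<in>V'. paths_through P {w})
      then (LEAST n. \<exists>V'. V' \<subseteq> N - {v} \<and> paths_through P {v} \<subseteq> (\<Union>w\<in>V'. paths_through P {w})
                         \<and> card V' = n)
      else card N)"

definition S_outer :: "'v list set \<Rightarrow> 'v set \<Rightarrow> nat \<Rightarrow> 'v set" where
  "S_outer P N k = {v \<in> N. MSC P N v \<ge> k}"

definition S_inner :: "'v list set \<Rightarrow> 'v set \<Rightarrow> nat \<Rightarrow> 'v set" where
  "S_inner P N k = {v \<in> N. MSC P N v \<ge> k + 1}"

end

theory Submission imports Defs begin

text \<open>Both inclusions reduce to single nodes. If \<open>MSC(v) > k\<close> then \<open>{v}\<close> is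
  \<open>k\<close>-identifiable: failure sets \<open>F\<^sub>1 \<ni> v\<close> and \<open>F\<^sub>2 \<not>\<ni> v\<close> with the same failed paths would
  let \<open>F\<^sub>2\<close> cover \<open>P\<^sub>v\<close> with at most \<open>k\<close> nodes. Conversely, a minimum cover \<open>V'\<close> of
  \<open>P\<^sub>v\<close> with \<open>|V'| < k\<close> makes \<open>V'\<close> and \<open>V' \<union> {v}\<close> indistinguishable. Since
  \<open>k\<close>-identifiable sets are closed under union and subsets, the maximum one contains
  every \<open>k\<close>-identifiable set, in particular these singletons.\<close>

lemma paths_through_eq_UN: "paths_through P F = (\<Union>w\<in>F. paths_through P {w})"
  unfolding paths_through_def by auto

lemma paths_through_insert:
  "paths_through P (insert v F) = paths_through P {v} \<union> paths_through P F"
  unfolding paths_through_def by auto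

lemma k_identifiable_Un:
  assumes "k_identifiable P N k S" "k_identifiable P N k T"
  shows "k_identifiable P N k (S \<union> T)"
  unfolding k_identifiable_def
proof (intro allI impI)
  fix F1 F2
  assume F: "F1 \<subseteq> N \<and> F2 \<subseteq> N \<and> card F1 \<le> k \<and> card F2 \<le> k
    \<and> F1 \<inter> (S \<union> T) \<noteq> F2 \<inter> (S \<union> T)"
  then have "F1 \<inter> S \<noteq> F2 \<inter> S \<or> F1 \<inter> T \<noteq> F2 \<inter> T" by blast
  with F assms show "distinguishable P F1 F2"
    unfolding k_identifiable_def by meson
qed

lemma k_identifiable_subset:
  assumes "k_identifiable P N k S" "T \<subseteq> S"
  shows "k_identifiable P N k T"
  unfolding k_identifiable_def
proof (intro allI impI)
  fix F1 F2
  assume F: "F1 \<subseteq> N \<and> F2 \<subseteq> N \<and> card F1 \<le> k \<and> card F2 \<le> k \<and> F1 \<inter> T \<noteq> F2 \<inter> T"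
  then have "F1 \<inter> S \<noteq> F2 \<inter> S" using \<open>T \<subseteq> S\<close> by blast
  with F assms(1) show "distinguishable P F1 F2"
    unfolding k_identifiable_def by simp
qed

lemma max_k_identifiable_greatest:
  assumes max: "max_k_identifiable P N k S" and "finite N"
    and "T \<subseteq> N" and "k_identifiable P N k T"
  shows "T \<subseteq> S"
proof -
  have SN: "S \<subseteq> N" and "k_identifiable P N k S"
    using max unfolding max_k_identifiable_def by auto
  with assms have "k_identifiable P N k (S \<union> T)" and STN: "S \<union> T \<subseteq> N"
    using k_identifiable_Un by auto
  then have "card (S \<union> T) \<le> card S"
    using max unfolding max_k_identifiable_def by blast
  moreover have "finite (S \<union> T)"
    using STN \<open>finite N\<close> finite_subset by blast
  ultimately have "S \<union> T = S"
    by (metis Un_upper1 card_seteq)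
  then show ?thesis by blast
qed

lemma MSC_le_card_cover:
  assumes "V' \<subseteq> N - {v}" and "paths_through P {v} \<subseteq> (\<Union>w\<in>V'. paths_through P {w})"
  shows "MSC P N v \<le> card V'"
proof -
  have "MSC P N v = (LEAST n. \<exists>V'. V' \<subseteq> N - {v}
          \<and> paths_through P {v} \<subseteq> (\<Union>w\<in>V'. paths_through P {w}) \<and> card V' = n)"
    using assms unfolding MSC_def by auto
  also have "\<dots> \<le> card V'"
    by (rule Least_le) (use assms in blast)
  finally show ?thesis .
qed

lemma MSC_cover_exists:
  assumes "MSC P N v < card N"
  obtains V' where "V' \<subseteq> N - {v}" "paths_through P {v} \<subseteq> (\<Union>w\<in>V'. paths_through P {w})"
    "card V' = MSC P N v"
proof -
  let ?cover = "\<lambda>V'. V' \<subseteq> N - {v} \<and> paths_through P {v} \<subseteq> (\<Union>w\<in>V'. paths_through P {w})"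
  have ex: "\<exists>V'. ?cover V'"
  proof (rule ccontr)
    assume "\<nexists>V'. ?cover V'"
    then have "MSC P N v = card N" unfolding MSC_def by (rule if_not_P)
    with assms show False by simp
  qed
  then have "MSC P N v = (LEAST n. \<exists>V'. ?cover V' \<and> card V' = n)"
    unfolding MSC_def by simp
  moreover have "\<exists>V'. ?cover V' \<and> card V' = (LEAST n. \<exists>V'. ?cover V' \<and> card V' = n)"
    by (rule LeastI_ex) (use ex in blast)
  ultimately show ?thesis using that by auto
qed

lemma indistinguishable_covers:
  assumes "paths_through P F1 = paths_through P F2" and "v \<in> F1"
  shows "paths_through P {v} \<subseteq> (\<Union>w\<in>F2. paths_through P {w})"
  using assms paths_through_eq_UN[of P F2] unfolding paths_through_def by auto

lemma k_identifiable_singleton_if_MSC_gt: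
  assumes "k < MSC P N v"
  shows "k_identifiable P N k {v}"
  unfolding k_identifiable_def distinguishable_def
proof (intro allI impI notI)
  fix F1 F2
  assume F: "F1 \<subseteq> N \<and> F2 \<subseteq> N \<and> card F1 \<le> k \<and> card F2 \<le> k \<and> F1 \<inter> {v} \<noteq> F2 \<inter> {v}"
    and eq: "paths_through P F1 = paths_through P F2"
  have covered: False if "v \<in> A" "v \<notin> B" "B \<subseteq> N" "card B \<le> k"
      and "paths_through P A = paths_through P B" for A B
  proof -
    have "MSC P N v \<le> card B"
      using that by (intro MSC_le_card_cover indistinguishable_covers) auto
    with that assms show False by linarith
  qed
  from F have "v \<in> F1 \<and> v \<notin> F2 \<or> v \<in> F2 \<and> v \<notin> F1" by blast
  then show False
    using covered[of F1 F2] covered[of F2 F1] F eq by auto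
qed

lemma MSC_ge_if_k_identifiable_singleton:
  assumes "finite N" "v \<in> N" "k < card N" and kid: "k_identifiable P N k {v}"
  shows "k \<le> MSC P N v"
proof (rule ccontr)
  assume "\<not> k \<le> MSC P N v"
  then have lt: "MSC P N v < k" by simp
  with assms obtain V' where V': "V' \<subseteq> N - {v}"
    "paths_through P {v} \<subseteq> (\<Union>w\<in>V'. paths_through P {w})" "card V' = MSC P N v"
    by (metis MSC_cover_exists order.strict_trans)
  have "finite V'" using V'(1) \<open>finite N\<close> finite_subset by blast
  moreover have "v \<notin> V'" using V'(1) by blast
  ultimately have "card (insert v V') \<le> k" using V'(3) lt by simp
  moreover have "paths_through P (insert v V') = paths_through P V'"
    using V'(2) paths_through_insert[of P v V'] paths_through_eq_UN[of P V'] by auto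
  moreover have "insert v V' \<subseteq> N" "V' \<subseteq> N" "card V' \<le> k"
    using V' lt \<open>v \<in> N\<close> by auto
  moreover have "insert v V' \<inter> {v} \<noteq> V' \<inter> {v}" using V'(1) by auto
  ultimately show False
    using kid unfolding k_identifiable_def distinguishable_def by blast
qed

theorem corollary7:
  fixes V M :: "'v set" and E :: "'v \<Rightarrow> 'v \<Rightarrow> bool" and P :: "'v list set"
    and k :: nat and S :: "'v set"
  assumes "connected_graph V E"
    and "M \<subseteq> V"
    and "\<forall>p\<in>P. measurement_path V E M p"
    and "1 \<le> k" and "k \<le> card (V - M) - 1"
    and "max_k_identifiable P (V - M) k S"
  shows "S_inner P (V - M) k \<subseteq> S \<and> S \<subseteq> S_outer P (V - M) k"
proof
  have fin: "finite (V - M)" using assms(1) unfolding connected_graph_def by auto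
  have SN: "S \<subseteq> V - M" and kid: "k_identifiable P (V - M) k S"
    using assms(6) unfolding max_k_identifiable_def by auto
  show "S_inner P (V - M) k \<subseteq> S"
  proof
    fix v assume "v \<in> S_inner P (V - M) k"
    then have "v \<in> V - M" and "k < MSC P (V - M) v"
      unfolding S_inner_def by auto
    then show "v \<in> S"
      using max_k_identifiable_greatest[OF assms(6) fin, of "{v}"]
        k_identifiable_singleton_if_MSC_gt[of k P "V - M" v]
      by simp
  qed
  have "k < card (V - M)" using assms(4,5) by linarith
  show "S \<subseteq> S_outer P (V - M) k"
  proof
    fix v assume "v \<in> S"
    then have "v \<in> V - M" and "k_identifiable P (V - M) k {v}"
      using SN k_identifiable_subset[OF kid, of "{v}"] by auto
    then show "v \<in> S_outer P (V - M) k"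
      unfolding S_outer_def
      using MSC_ge_if_k_identifiable_singleton[OF fin _ \<open>k < card (V - M)\<close>] by simp
  qed
qed

end
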